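(* Let $s\ge1$. The expected number of pierced circles in a random meander graph $\Gamma^1_{2s-1}$ is $\frac{O(s,1)}{C_s^2}$, where $O(s,1)=\binom{2s-2}{1}C_{s-1}^2=(2s-2)C_{s-1}^2$.
   Context: A $p$-string of length $s$ is a correctly matched (balanced) string of $s$ left and $s$ right parentheses; there are $C_s=\frac{1}{s+1}\binom{2s}{s}$ (Catalan number) of them. Given two $p$-strings $U$ (upper) and $W$ (lower) of length $s$, the meander graph $\Gamma^1_{2s-1}$ is obtained by marking points $0,1,\dots,2s$ on the $x$-axis, taking the segment $[0,2s]$, joining points $a,b$ by a semicircle in the upper half-plane for each matched pair of $U$ at positions $a<b$ (positions $1,\dots,2s$), and joining points $a-1,b-1$ by a semicircle in the lower half-plane for each matched pair of $W$ at positions $a<b$; the vertices are the points $1,\dots,2s-1$. The graph has a pierced circle at position $i$ ($1\le i\le 2s-2$) if the vertices $i$ and $i+1$ are joined both by an upper semicircle and by a lower semicircle. A random meander graph is obtained by choosing $(U,W)$ uniformly among the $C_s^2$ pairs. *)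

theory Defs
  imports Complex_Main
begin

text \<open>A parenthesis string is a list of booleans: True = left parenthesis, False = right.\<close>

definition nlefts :: "bool list \<Rightarrow> nat" where
  "nlefts xs = length (filter id xs)"

definition nrights :: "bool list \<Rightarrow> nat" where
  "nrights xs = length (filter Not xs)"

definition balanced :: "bool list \<Rightarrow> bool" where
  "balanced xs \<longleftrightarrow> (\<forall>k \<le> length xs. nrights (take k xs) \<le> nlefts (take k xs))
                     \<and> nlefts xs = nrights xs"

definition pstrings :: "nat \<Rightarrow> bool list set" where
  "pstrings s = {w. length w = 2 * s \<and> balanced w}"

definition matched :: "bool list \<Rightarrow> nat \<Rightarrow> nat \<Rightarrow> bool" where
  "matched w a b \<longleftrightarrow> 1 \<le> a \<and> a < b \<and> b \<le> length w \<and> w ! (a - 1) \<and> \<not> w ! (b - 1)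
     \<and> balanced (take (b - a - 1) (drop a w))"

text \<open>Pierced circle at position i of the meander graph of (U, W): vertices i, i+1 are joined
  by an upper semicircle (pair (i,i+1) of U) and a lower semicircle (pair (i+1,i+2) of W,
  drawn between points i and i+1).\<close>
definition pierced :: "nat \<Rightarrow> bool list \<Rightarrow> bool list \<Rightarrow> nat \<Rightarrow> bool" where
  "pierced s U W i \<longleftrightarrow> 1 \<le> i \<and> i \<le> 2 * s - 2 \<and> matched U i (i + 1) \<and> matched W (i + 1) (i + 2)"

definition num_pierced :: "nat \<Rightarrow> bool list \<Rightarrow> bool list \<Rightarrow> nat" where
  "num_pierced s U W = card {i. pierced s U W i}"

definition expected_pierced :: "nat \<Rightarrow> real" where
  "expected_pierced s =
     (\<Sum>p \<in> pstrings s \<times> pstrings s. real (num_pierced s (fst p) (snd p)))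
       / real (card (pstrings s \<times> pstrings s))"

definition catalan :: "nat \<Rightarrow> real" where
  "catalan s = real ((2 * s) choose s) / real (s + 1)"

end

(*
  By linearity of expectation, the expected number of pierced circles is the sum over the
  positions i = 1, ..., 2s-2 of the probability that U has an adjacent matched pair at (i, i+1)
  and W one at (i+1, i+2); as U and W are independent this is a product of two probabilities.
  An adjacent matched pair is just the two letters "()", and deleting them from a p-string of
  length s at a fixed position is a bijection onto the p-strings of length s-1, so each of the
  two probabilities is C_{s-1}/C_s.  The count C_s of p-strings comes from the ballot numbers:
  classifying the paths that never go below height 0 by their last step gives Pascal's
  recurrence for (a+b choose b) - (a+b choose b-1).
*)
theory Submission
  imports Defs
begin

lemma nlefts_simps [simp]:
  "nlefts [] = 0" "nlefts (x # w) = (if x then Suc (nlefts w) else nlefts w)"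
  "nlefts (v @ w) = nlefts v + nlefts w"
  by (auto simp: nlefts_def)

lemma nrights_simps [simp]:
  "nrights [] = 0" "nrights (x # w) = (if x then nrights w else Suc (nrights w))"
  "nrights (v @ w) = nrights v + nrights w"
  by (auto simp: nrights_def)

lemma length_eq_nlefts_plus_nrights: "length w = nlefts w + nrights w"
  by (induction w) auto

primrec nonneg_path :: "nat \<Rightarrow> bool list \<Rightarrow> bool" where
  "nonneg_path h [] = True"
| "nonneg_path h (x # w) = (if x then nonneg_path (Suc h) w else 0 < h \<and> nonneg_path (h - 1) w)"

lemma nonneg_path_iff_prefixes:
  "nonneg_path h w \<longleftrightarrow> (\<forall>k \<le> length w. nrights (take k w) \<le> h + nlefts (take k w))"
proof (induction w arbitrary: h)
  case Nil
  then show ?case by simp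
next
  case (Cons x w)
  let ?ok = "\<lambda>u. nrights u \<le> h + nlefts u"
  have "nonneg_path h (x # w) \<longleftrightarrow> (\<forall>k \<le> length w. ?ok (x # take k w))"
  proof (cases x)
    case False
    have "0 < h" if "\<forall>k \<le> length w. ?ok (False # take k w)"
      using that[rule_format, of 0] by simp
    then show ?thesis using False Cons.IH by force
  qed (simp add: Cons.IH)
  also have "\<dots> \<longleftrightarrow> (\<forall>k \<le> length (x # w). ?ok (take k (x # w)))"
    by (simp only: length_Cons less_Suc_eq_le[symmetric] All_less_Suc2) simp
  finally show ?case .
qed

lemma balanced_iff_nonneg_path: "balanced w \<longleftrightarrow> nonneg_path 0 w \<and> nlefts w = nrights w"
  by (simp add: balanced_def nonneg_path_iff_prefixes)

lemma nonneg_path_snoc: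
  "nonneg_path h (v @ [x]) \<longleftrightarrow> nonneg_path h v \<and> nrights (v @ [x]) \<le> h + nlefts (v @ [x])"
  by (induction v arbitrary: h) auto

lemma nonneg_path_remove_pair:
  "nonneg_path h (xs @ True # False # ys) \<longleftrightarrow> nonneg_path h (xs @ ys)"
  by (induction xs arbitrary: h) auto

definition ballot_paths :: "nat \<Rightarrow> nat \<Rightarrow> bool list set" where
  "ballot_paths a b = {w. nlefts w = a \<and> nrights w = b \<and> nonneg_path 0 w}"

lemma finite_ballot_paths: "finite (ballot_paths a b)"
proof (rule finite_subset)
  show "ballot_paths a b \<subseteq> {w. length w = a + b}"
    by (auto simp: ballot_paths_def length_eq_nlefts_plus_nrights)
qed (rule finite_list_length)

lemma pstrings_eq_ballot_paths: "pstrings s = ballot_paths s s"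
  by (auto simp: pstrings_def ballot_paths_def balanced_iff_nonneg_path length_eq_nlefts_plus_nrights)

lemma finite_pstrings: "finite (pstrings s)"
  by (simp add: pstrings_eq_ballot_paths finite_ballot_paths)

lemma ballot_paths_empty: "a < b \<Longrightarrow> ballot_paths a b = {}"
  by (auto simp: ballot_paths_def nonneg_path_iff_prefixes dest: spec[of _ "length _"])

lemma ballot_paths_0: "ballot_paths a 0 = {replicate a True}"
proof -
  have "w = replicate (nlefts w) True" if "nrights w = 0" for w
    using that by (induction w) auto
  moreover have "nonneg_path h (replicate a True)" for h
    by (induction a arbitrary: h) auto
  ultimately show ?thesis
    by (auto simp: ballot_paths_def nlefts_def nrights_def)
qed

lemma ballot_paths_Suc_Suc:
  assumes "b \<le> a"
  shows "ballot_paths (Suc a) (Suc b) =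
    (\<lambda>v. v @ [True]) ` ballot_paths a (Suc b) \<union> (\<lambda>v. v @ [False]) ` ballot_paths (Suc a) b"
    (is "?L = ?R")
proof
  show "?L \<subseteq> ?R"
  proof
    fix w assume w: "w \<in> ?L"
    then have "w \<noteq> []" by (auto simp: ballot_paths_def)
    then obtain v x where "w = v @ [x]" by (metis rev_exhaust)
    with w show "w \<in> ?R"
      by (cases x) (auto simp: ballot_paths_def nonneg_path_snoc)
  qed
qed (use assms in \<open>auto simp: ballot_paths_def nonneg_path_snoc\<close>)

lemma card_ballot_paths_Suc_Suc:
  assumes "b \<le> a"
  shows "card (ballot_paths (Suc a) (Suc b))
       = card (ballot_paths a (Suc b)) + card (ballot_paths (Suc a) b)"
  unfolding ballot_paths_Suc_Suc[OF assms]
  by (subst card_Un_disjoint) (auto simp: finite_ballot_paths card_image inj_on_def)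

text \<open>The ballot formula, written additively to avoid truncated subtraction.\<close>

lemma card_ballot_paths:
  assumes "b \<le> a"
  shows "card (ballot_paths a (Suc b)) + (a + Suc b choose b) = a + Suc b choose Suc b"
  using assms
proof (induction "a + b" arbitrary: a b rule: less_induct)
  case less
  show ?case
  proof (cases "b = a")
    case True
    then show ?thesis
      using ballot_paths_empty[of a "Suc b"] binomial_symmetric[of b "a + Suc b"] by simp
  next
    case False
    then obtain a' where a: "a = Suc a'" and "b \<le> a'"
      using less.prems by (cases a) auto
    define n where "n = a' + Suc b"
    have ih_last_up: "card (ballot_paths a' (Suc b)) + (n choose b) = n choose Suc b"
      using less.hyps[of a' b] \<open>b \<le> a'\<close> a by (simp add: n_def)
    have last_step:
      "card (ballot_paths a (Suc b)) = card (ballot_paths a' (Suc b)) + card (ballot_paths a b)"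
      using card_ballot_paths_Suc_Suc[OF \<open>b \<le> a'\<close>] a by simp
    show ?thesis
    proof (cases b)
      case 0
      then show ?thesis
        using ih_last_up last_step by (simp add: ballot_paths_0 a n_def)
    next
      case (Suc c)
      have "card (ballot_paths a b) + (n choose c) = n choose b"
        using less.hyps[of a c] less.prems a Suc by (simp add: n_def)
      then show ?thesis
        using ih_last_up last_step Suc by (simp add: a n_def)
    qed
  qed
qed

lemma card_pstrings: "real (card (pstrings s)) = catalan s"
proof (cases s)
  case 0
  then show ?thesis by (simp add: pstrings_eq_ballot_paths ballot_paths_0 catalan_def)
next
  case (Suc n)
  have "card (pstrings s) + (2 * s choose n) = 2 * s choose s"
    using card_ballot_paths[of n s] Suc by (simp add: pstrings_eq_ballot_paths mult_2)
  moreover have "s * (2 * s choose s) = Suc s * (2 * s choose n)"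
    using Suc_times_binomial_add[of n s] Suc by (simp add: mult_2)
  ultimately have "Suc s * card (pstrings s) = 2 * s choose s"
    by (metis add_mult_distrib2 mult_Suc add_right_cancel)
  then show ?thesis
    unfolding catalan_def by (simp add: field_simps flip: of_nat_mult)
qed

definition insert_pair :: "nat \<Rightarrow> bool list \<Rightarrow> bool list" where
  "insert_pair j v = take j v @ True # False # drop j v"

lemma balanced_insert_pair: "balanced (insert_pair j v) \<longleftrightarrow> balanced v"
proof -
  have "nlefts (insert_pair j v) = Suc (nlefts v)" "nrights (insert_pair j v) = Suc (nrights v)"
    using nlefts_simps(3)[of "take j v" "drop j v"] nrights_simps(3)[of "take j v" "drop j v"]
    by (simp_all add: insert_pair_def)
  then show ?thesis
    by (simp add: balanced_iff_nonneg_path insert_pair_def nonneg_path_remove_pair)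
qed

lemma inj_on_insert_pair: "inj_on (insert_pair j) {v. j \<le> length v}"
proof (rule inj_onI)
  fix v v'
  assume "v \<in> {v. j \<le> length v}" "v' \<in> {v. j \<le> length v}" "insert_pair j v = insert_pair j v'"
  then have "take j v = take j v' \<and> drop j v = drop j v'"
    by (simp add: insert_pair_def append_eq_append_conv)
  then show "v = v'" by (metis append_take_drop_id)
qed

lemma length_insert_pair: "j \<le> length v \<Longrightarrow> length (insert_pair j v) = Suc (Suc (length v))"
  by (simp add: insert_pair_def)

lemma nth_insert_pair: "j \<le> length v \<Longrightarrow> insert_pair j v ! j \<and> \<not> insert_pair j v ! Suc j"
  by (simp add: insert_pair_def nth_append)

lemma insert_pair_image_pstrings:
  assumes "Suc j < 2 * s"
  shows "insert_pair j ` pstrings (s - 1) = {U \<in> pstrings s. U ! j \<and> \<not> U ! Suc j}"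
proof
  show "insert_pair j ` pstrings (s - 1) \<subseteq> {U \<in> pstrings s. U ! j \<and> \<not> U ! Suc j}"
  proof
    fix U assume "U \<in> insert_pair j ` pstrings (s - 1)"
    then obtain v where v: "length v = 2 * (s - 1)" "balanced v" and U: "U = insert_pair j v"
      by (auto simp: pstrings_def)
    have "j \<le> length v"
      using v assms by simp
    then show "U \<in> {U \<in> pstrings s. U ! j \<and> \<not> U ! Suc j}"
      using v assms by (simp add: U pstrings_def length_insert_pair nth_insert_pair balanced_insert_pair)
  qed
next
  show "{U \<in> pstrings s. U ! j \<and> \<not> U ! Suc j} \<subseteq> insert_pair j ` pstrings (s - 1)"
  proof
    fix U assume U: "U \<in> {U \<in> pstrings s. U ! j \<and> \<not> U ! Suc j}"
    define v where "v = take j U @ drop (Suc (Suc j)) U"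
    have len: "Suc j < length U"
      using U assms by (simp add: pstrings_def)
    have "drop j U = U ! j # U ! Suc j # drop (Suc (Suc j)) U"
      using Cons_nth_drop_Suc[OF len] Cons_nth_drop_Suc[OF Suc_lessD[OF len]] by simp
    then have Uv: "U = insert_pair j v"
      using U len append_take_drop_id[of j U] by (simp add: v_def insert_pair_def)
    have "length v = 2 * (s - 1)"
      using U len by (simp add: v_def pstrings_def)
    moreover have "balanced v"
      using U balanced_insert_pair[of j v] by (simp add: pstrings_def flip: Uv)
    ultimately show "U \<in> insert_pair j ` pstrings (s - 1)"
      using Uv by (auto simp: pstrings_def)
  qed
qed

lemma card_pstrings_adjacent_pair:
  assumes "Suc j < 2 * s"
  shows "card {U \<in> pstrings s. U ! j \<and> \<not> U ! Suc j} = card (pstrings (s - 1))"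
proof -
  have "inj_on (insert_pair j) (pstrings (s - 1))"
    using assms by (auto simp: pstrings_def intro: inj_on_subset[OF inj_on_insert_pair])
  then show ?thesis
    using card_image insert_pair_image_pstrings[OF assms] by metis
qed

lemma matched_adjacent_iff:
  "matched w a (Suc a) \<longleftrightarrow> 1 \<le> a \<and> a < length w \<and> w ! (a - 1) \<and> \<not> w ! a"
  by (auto simp: matched_def balanced_def)

lemma card_pstrings_matched_adjacent:
  assumes "1 \<le> a" "a < 2 * s"
  shows "card {U \<in> pstrings s. matched U a (Suc a)} = card (pstrings (s - 1))"
proof -
  have "{U \<in> pstrings s. matched U a (Suc a)} = {U \<in> pstrings s. U ! (a - 1) \<and> \<not> U ! Suc (a - 1)}"
    using assms by (auto simp: matched_adjacent_iff pstrings_def)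
  then show ?thesis
    using card_pstrings_adjacent_pair[of "a - 1" s] assms by simp
qed

lemma num_pierced_eq_card:
  "num_pierced s U W
     = card {i \<in> {1..2 * s - 2}. matched U i (Suc i) \<and> matched W (Suc i) (Suc (Suc i))}"
  unfolding num_pierced_def pierced_def by (rule arg_cong[where f = card]) auto

lemma sum_card_filter_conj_eq_sum_product:
  assumes "finite X" "finite Y" "finite I"
  shows "(\<Sum>p \<in> X \<times> Y. card {i \<in> I. A (fst p) i \<and> B (snd p) i})
       = (\<Sum>i \<in> I. card {x \<in> X. A x i} * card {y \<in> Y. B y i})"
proof -
  have "(\<Sum>i \<in> I. card {x \<in> X. A x i} * card {y \<in> Y. B y i})
      = (\<Sum>i \<in> I. (\<Sum>x \<in> X. of_bool (A x i)) * (\<Sum>y \<in> Y. of_bool (B y i)))"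
    by (simp add: assms Int_def)
  also have "\<dots> = (\<Sum>x \<in> X. \<Sum>y \<in> Y. \<Sum>i \<in> I. of_bool (A x i) * of_bool (B y i))"
    by (simp only: sum_product sum.swap[of _ I X] sum.swap[of _ I Y])
  also have "\<dots> = (\<Sum>p \<in> X \<times> Y. \<Sum>i \<in> I. of_bool (A (fst p) i \<and> B (snd p) i))"
    by (simp only: sum.cartesian_product' of_bool_conj fst_conv snd_conv)
  also have "\<dots> = (\<Sum>p \<in> X \<times> Y. card {i \<in> I. A (fst p) i \<and> B (snd p) i})"
    by (simp add: assms Int_def)
  finally show ?thesis ..
qed

theorem proposition3p5:
  fixes s :: nat
  assumes "s \<ge> 1"
  shows "expected_pierced s = real (2 * s - 2) * (catalan (s - 1))^2 / (catalan s)^2"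
proof -
  let ?P = "pstrings s" and ?I = "{1..2 * s - 2}"
  have "(\<Sum>p \<in> ?P \<times> ?P. num_pierced s (fst p) (snd p)) = (\<Sum>i \<in> ?I.
      card {U \<in> ?P. matched U i (Suc i)} * card {W \<in> ?P. matched W (Suc i) (Suc (Suc i))})"
    unfolding num_pierced_eq_card by (rule sum_card_filter_conj_eq_sum_product[OF finite_pstrings finite_pstrings]) simp
  also have "\<dots> = (\<Sum>i \<in> ?I. card (pstrings (s - 1)) * card (pstrings (s - 1)))"
  proof (rule sum.cong[OF refl])
    fix i assume "i \<in> ?I"
    then have "1 \<le> i" "Suc i < 2 * s"
      by auto
    then show "card {U \<in> ?P. matched U i (Suc i)} * card {W \<in> ?P. matched W (Suc i) (Suc (Suc i))}
        = card (pstrings (s - 1)) * card (pstrings (s - 1))"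
      by (simp add: card_pstrings_matched_adjacent)
  qed
  finally show ?thesis
    using assms by (simp add: expected_pierced_def card_cartesian_product card_pstrings power2_eq_square
        flip: of_nat_sum)
qed

end
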